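(* Let $d\ge 2$ and $S\in\mathcal{S}^d(1)$ be such that the barycentric coordinates of its unique interior integral point with respect to the vertices of $S$ are, up to ordering, \[ \Big(\tfrac1{s_1},\ldots,\tfrac1{s_{d-1}},\tfrac1{2(s_d-1)},\tfrac1{2(s_d-1)}\Big). \] Then there exist a positive integer $h$ and $a\in\{0,1,\ldots,h-1\}^{d-1}$ such that $S$ is unimodularly equivalent to $\operatorname{conv}\big((T^{d-1}_{1,d}\times\{0\})\cup\{(a,h),-(a,h)\}\big)$.
   Context: The Sylvester sequence: $s_1 = 2$, $s_i = \prod_{j=1}^{i-1} s_j + 1$ for $i\ge2$. $\mathcal{S}^d(1)$: $d$-dimensional simplices in $\mathbb{R}^d$ with integral vertices and exactly one interior integral point. $T^{d-1}_{1,d} := \operatorname{conv}(\{0, s_1e_1,\ldots,s_{d-1}e_{d-1}\})\subseteq\mathbb{R}^{d-1}$. Unimodular equivalence: existence of an affine bijection of $\mathbb{R}^d$ preserving $\mathbb{Z}^d$ mapping one onto the other. *)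

theory Defs
  imports "HOL-Analysis.Analysis"
begin

text \<open>Sylvester sequence, indexed from 1: s 1 = 2, s i = (prod of s j, 1 <= j < i) + 1.
  (The value at index 0 is irrelevant.)\<close>
fun sylvester :: "nat \<Rightarrow> nat" where
  "sylvester n = (if n \<le> 1 then 2 else prod_list (map sylvester [1..<n]) + 1)"

text \<open>Points of R^d are represented as functions nat => real whose coordinates
  with index >= d vanish; coordinates are indexed 0..d-1.\<close>
type_synonym pt = "nat \<Rightarrow> real"

definition Rd :: "nat \<Rightarrow> pt set" where
  "Rd d = {x. \<forall>i\<ge>d. x i = 0}"

definition Zd :: "nat \<Rightarrow> pt set" where
  "Zd d = {x \<in> Rd d. \<forall>i<d. x i \<in> \<int>}"

definition conv :: "pt set \<Rightarrow> pt set" where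
  "conv V = {x. \<exists>F c. finite F \<and> F \<subseteq> V \<and> F \<noteq> {} \<and> (\<forall>v\<in>F. 0 \<le> c v) \<and>
                    sum c F = 1 \<and> x = (\<lambda>i. \<Sum>v\<in>F. c v * v i)}"

definition interior_d :: "nat \<Rightarrow> pt set \<Rightarrow> pt set" where
  "interior_d d S = {x \<in> Rd d. \<exists>e>0. \<forall>y\<in>Rd d. (\<Sum>i<d. (y i - x i)\<^sup>2) < e\<^sup>2 \<longrightarrow> y \<in> S}"

definition aff_indep :: "nat \<Rightarrow> (nat \<Rightarrow> pt) \<Rightarrow> bool" where
  "aff_indep d v \<longleftrightarrow> (\<forall>c::nat \<Rightarrow> real.
      (\<forall>i. (\<Sum>k\<in>{1..d}. c k * (v k i - v 0 i)) = 0) \<longrightarrow> (\<forall>k\<in>{1..d}. c k = 0))"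

definition lattice_simplex :: "nat \<Rightarrow> (nat \<Rightarrow> pt) \<Rightarrow> bool" where
  "lattice_simplex d v \<longleftrightarrow> (\<forall>k\<le>d. v k \<in> Zd d) \<and> aff_indep d v"

definition is_bary :: "nat \<Rightarrow> (nat \<Rightarrow> pt) \<Rightarrow> pt \<Rightarrow> (nat \<Rightarrow> real) \<Rightarrow> bool" where
  "is_bary d v z b \<longleftrightarrow> (\<Sum>k\<le>d. b k) = 1 \<and> (\<forall>i. z i = (\<Sum>k\<le>d. b k * v k i))"

definition unimod_equiv :: "nat \<Rightarrow> pt set \<Rightarrow> pt set \<Rightarrow> bool" where
  "unimod_equiv d S T \<longleftrightarrow> (\<exists>f::pt \<Rightarrow> pt.
      bij_betw f (Rd d) (Rd d) \<and>
      (\<exists>(A::nat \<Rightarrow> nat \<Rightarrow> real) (b::pt). \<forall>x\<in>Rd d. \<forall>i<d. f x i = (\<Sum>j<d. A i j * x j) + b i) \<and>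
      f ` Zd d = Zd d \<and> f ` S = T)"

definition target_bary :: "nat \<Rightarrow> nat \<Rightarrow> real" where
  "target_bary d j = (if j < d - 1 then 1 / real (sylvester (j + 1))
                      else 1 / (2 * (real (sylvester d) - 1)))"

text \<open>Vertices of T^{d-1}_{1,d} x {0} in R^d: the origin and s_i e_i for i = 1..d-1
  (e_i is the coordinate with index i-1).\<close>
definition T_verts :: "nat \<Rightarrow> pt set" where
  "T_verts d = insert (\<lambda>_. 0)
     ((\<lambda>i. (\<lambda>j. if j = i - 1 then real (sylvester i) else 0)) ` {1..d-1})"

definition ah_point :: "nat \<Rightarrow> (nat \<Rightarrow> int) \<Rightarrow> int \<Rightarrow> pt" where
  "ah_point d a h = (\<lambda>j. if j < d - 1 then real_of_int (a j) else if j = d - 1 then real_of_int h else 0)"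

end

theory Submission
  imports Defs "Jordan_Normal_Form.Determinant"
begin

text \<open>Order the vertices so that \<open>z\<close> has weight \<open>1/s\<^sub>i\<^sub>+\<^sub>1\<close> at \<open>w i\<close> (\<open>i < n = d - 1\<close>) and
  \<open>1/(2Q)\<close> at \<open>w n\<close> and \<open>w (n + 1)\<close>, where \<open>Q = s\<^sub>1 \<cdots> s\<^sub>d\<^sub>-\<^sub>1 = s\<^sub>d - 1\<close>. Take affine coordinates
  centred at the midpoint \<open>m\<close> of \<open>w n\<close> and \<open>w (n + 1)\<close>: \<open>\<rho>\<^sub>i = s\<^sub>i\<^sub>+\<^sub>1 \<lambda>\<^sub>i\<close> and \<open>\<tau> = \<lambda>\<^sub>n - \<lambda>\<^sub>n\<^sub>+\<^sub>1\<close>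
  in terms of the barycentric coordinates \<open>\<lambda>\<close>. The Sylvester congruences make \<open>m\<close> and the
  vectors \<open>(w i - m)/s\<^sub>i\<^sub>+\<^sub>1\<close> lattice points, so integral changes of \<open>\<rho>\<close> and \<open>\<tau>\<close> preserve the lattice.
  A lattice point \<open>x \<noteq> m\<close> with \<open>\<rho> \<in> [0,1)\<^sup>n\<close> and \<open>\<tau> \<in> [0,1/Q)\<close> would make \<open>z + m - x\<close> a second
  interior lattice point. Consequently the heights \<open>\<tau>\<close> of lattice points form a group \<open>(1/h)\<int>\<close>, the
  lattice points of height \<open>0\<close> are those with integral \<open>\<rho>\<close>, and the shear \<open>x \<mapsto> (\<rho> + \<tau> a, h \<tau>)\<close>,
  with \<open>a\<close> read off from a lattice point of height \<open>1/h\<close>, is unimodular and maps the simplex onto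
  \<open>conv ((T \<times> {0}) \<union> {\<plusminus>(a, h)})\<close>.\<close>

section \<open>Sylvester numbers\<close>

declare sylvester.simps [simp del]

lemma sylvester_eq_prod_plus_1:
  assumes "n \<ge> 1"
  shows "sylvester n = (\<Prod>j\<in>{1..<n}. sylvester j) + 1"
proof (cases "n = 1")
  case True
  thus ?thesis by (simp add: sylvester.simps)
next
  case False
  hence "sylvester n = prod_list (map sylvester [1..<n]) + 1"
    using assms by (subst sylvester.simps) simp
  thus ?thesis
    by (simp add: prod.distinct_set_conv_list[of "[1..<n]", simplified])
qed

lemma sylvester_ge_2: "sylvester n \<ge> 2"
proof (induction n rule: less_induct)
  case (less n)
  show ?case
  proof (cases "n \<le> 1")
    case True
    thus ?thesis by (simp add: sylvester.simps)
  next
    case False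
    have "(\<Prod>j\<in>{1..<n}. sylvester j) \<ge> 1"
      using less.IH by (intro prod_ge_1) (meson atLeastLessThan_iff le_trans one_le_numeral)
    thus ?thesis using sylvester_eq_prod_plus_1[of n] False by simp
  qed
qed

lemma sylvester_mod_earlier:
  assumes "0 < i" "i < j"
  shows "sylvester j mod sylvester i = 1"
proof -
  have "sylvester i dvd (\<Prod>l\<in>{1..<j}. sylvester l)"
    using assms by (intro dvd_prodI) auto
  thus ?thesis
    using sylvester_eq_prod_plus_1[of j] sylvester_ge_2[of i] assms by (auto simp: mod_Suc)
qed

definition sylvester_cofactor :: "nat \<Rightarrow> nat \<Rightarrow> nat" where
  "sylvester_cofactor d i = (\<Prod>j\<in>{1..<d} - {i}. sylvester j)"

lemma prod_sylvester_eq_mult_cofactor: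
  "i \<in> {1..<d} \<Longrightarrow> (\<Prod>j\<in>{1..<d}. sylvester j) = sylvester i * sylvester_cofactor d i"
  unfolding sylvester_cofactor_def by (simp add: prod.remove)

lemma sylvester_dvd_cofactor:
  "i \<in> {1..<d} \<Longrightarrow> l \<in> {1..<d} \<Longrightarrow> i \<noteq> l \<Longrightarrow> sylvester i dvd sylvester_cofactor d l"
  unfolding sylvester_cofactor_def by (rule dvd_prodI) auto

lemma sylvester_dvd_cofactor_plus_1:
  assumes i: "i \<in> {1..<d}"
  shows "sylvester i dvd sylvester_cofactor d i + 1"
proof -
  let ?s = "sylvester i" and ?P = "\<Prod>j\<in>{i<..<d}. sylvester j"
  have s2: "?s \<ge> 2" by (rule sylvester_ge_2)
  have "{1..<d} - {i} = {1..<i} \<union> {i<..<d}" using i by auto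
  hence "sylvester_cofactor d i = (\<Prod>j\<in>{1..<i} \<union> {i<..<d}. sylvester j)"
    unfolding sylvester_cofactor_def by simp
  also have "\<dots> = (\<Prod>j\<in>{1..<i}. sylvester j) * ?P"
    by (rule prod.union_disjoint) auto
  also have "(\<Prod>j\<in>{1..<i}. sylvester j) = ?s - 1"
    using sylvester_eq_prod_plus_1[of i] i by simp
  finally have cof: "sylvester_cofactor d i = (?s - 1) * ?P" .
  have "?P mod ?s = (\<Prod>j\<in>{i<..<d}. sylvester j mod ?s) mod ?s"
    by (rule mod_prod_eq[symmetric])
  also have "\<dots> = 1"
    using i s2 by (simp add: sylvester_mod_earlier)
  finally have "(sylvester_cofactor d i + 1) mod ?s = ((?s - 1) * 1 + 1) mod ?s"
    unfolding cof by (metis mod_add_left_eq mod_mult_right_eq)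
  also have "\<dots> = 0" using s2 by simp
  finally show ?thesis by auto
qed

section \<open>Convex hulls of indexed points\<close>

lemma convex_comb_mem_conv_image:
  assumes "finite I" "\<forall>k\<in>I. 0 \<le> \<mu> k" "sum \<mu> I = 1"
  shows "(\<lambda>j. \<Sum>k\<in>I. \<mu> k * p k j) \<in> conv (p ` I)"
proof -
  define c where "c v = (\<Sum>k\<in>{k\<in>I. p k = v}. \<mu> k)" for v
  have "I \<noteq> {}" using assms(3) by auto
  moreover have "\<forall>v\<in>p ` I. 0 \<le> c v" unfolding c_def using assms(2) by (auto intro: sum_nonneg)
  moreover have "sum c (p ` I) = 1"
    unfolding c_def using sum.image_gen[OF assms(1), of \<mu> p] assms(3) by simp
  moreover have "(\<Sum>v\<in>p ` I. c v * v j) = (\<Sum>k\<in>I. \<mu> k * p k j)" for j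
  proof -
    have "(\<Sum>v\<in>p ` I. c v * v j) = (\<Sum>v\<in>p ` I. \<Sum>k\<in>{k\<in>I. p k = v}. \<mu> k * p k j)"
      unfolding c_def sum_distrib_right by (intro sum.cong) auto
    also have "\<dots> = (\<Sum>k\<in>I. \<mu> k * p k j)"
      using sum.image_gen[OF assms(1), of "\<lambda>k. \<mu> k * p k j" p] by simp
    finally show ?thesis .
  qed
  ultimately show ?thesis
    unfolding conv_def using assms(1) by (intro CollectI exI[of _ "p ` I"] exI[of _ c]) auto
qed

lemma mem_conv_image_obtain:
  assumes "finite I" "x \<in> conv (p ` I)"
  obtains \<mu> where "\<forall>k\<in>I. 0 \<le> \<mu> k" "sum \<mu> I = 1" "x = (\<lambda>j. \<Sum>k\<in>I. \<mu> k * p k j)"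
proof -
  obtain F c where F: "finite F" "F \<subseteq> p ` I" "\<forall>v\<in>F. 0 \<le> c v" "sum c F = 1"
    and x: "x = (\<lambda>i. \<Sum>v\<in>F. c v * v i)"
    using assms(2) unfolding conv_def by blast
  define g where "g v = (SOME k. k \<in> I \<and> p k = v)" for v
  have g: "g v \<in> I \<and> p (g v) = v" if "v \<in> F" for v
    unfolding g_def by (rule someI_ex) (use F(2) that in auto)
  have "inj_on g F" by (rule inj_onI) (metis g)
  define \<mu> where "\<mu> k = (if k \<in> g ` F then c (p k) else 0)" for k
  have sum_\<mu>: "(\<Sum>k\<in>I. \<mu> k * f k) = (\<Sum>v\<in>F. c v * f (g v))" for f :: "_ \<Rightarrow> real"
  proof -
    have "(\<Sum>k\<in>I. \<mu> k * f k) = (\<Sum>k\<in>g ` F. c (p k) * f k)"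
      unfolding \<mu>_def by (rule sum.mono_neutral_cong_right) (use assms(1) g in auto)
    also have "\<dots> = (\<Sum>v\<in>F. c (p (g v)) * f (g v))"
      by (rule sum.reindex[OF \<open>inj_on g F\<close>, unfolded comp_def])
    also have "\<dots> = (\<Sum>v\<in>F. c v * f (g v))" using g by (intro sum.cong) auto
    finally show ?thesis .
  qed
  show ?thesis
  proof
    show "\<forall>k\<in>I. 0 \<le> \<mu> k" unfolding \<mu>_def using F(3) g by auto
    show "sum \<mu> I = 1" using sum_\<mu>[of "\<lambda>_. 1"] F(4) by simp
    show "x = (\<lambda>j. \<Sum>k\<in>I. \<mu> k * p k j)"
      unfolding sum_\<mu> x using g by (auto intro: sum.cong)
  qed
qed

lemma conv_mono:
  assumes "A \<subseteq> B"
  shows "conv A \<subseteq> conv B"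
proof
  fix x assume "x \<in> conv A"
  then obtain F c where "finite F" "F \<subseteq> A" "F \<noteq> {}" "\<forall>v\<in>F. 0 \<le> c v" "sum c F = 1"
    "x = (\<lambda>i. \<Sum>v\<in>F. c v * v i)"
    unfolding conv_def by blast
  thus "x \<in> conv B" unfolding conv_def using assms by (intro CollectI exI[of _ F] exI[of _ c]) auto
qed

section \<open>Discrete subgroups of the reals\<close>

lemma least_positive_element_if_gap:
  fixes G :: "real set"
  assumes diff: "\<And>a b. a \<in> G \<Longrightarrow> b \<in> G \<Longrightarrow> a - b \<in> G"
    and gap: "\<And>g. g \<in> G \<Longrightarrow> 0 < g \<Longrightarrow> \<delta> \<le> g" and "\<delta> > 0"
    and "g\<^sub>0 \<in> G" "0 < g\<^sub>0"
  obtains t where "t \<in> G" "0 < t" "\<And>g. g \<in> G \<Longrightarrow> 0 < g \<Longrightarrow> t \<le> g"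
proof -
  define P where "P = {g\<in>G. 0 < g}"
  have "P \<noteq> {}" "bdd_below P" unfolding P_def using assms(4,5) by (auto intro: bdd_belowI[of _ 0])
  define t where "t = Inf P"
  have t_le: "t \<le> g" if "g \<in> P" for g unfolding t_def by (rule cInf_lower[OF that \<open>bdd_below P\<close>])
  have "t \<in> P"
  proof (rule ccontr)
    assume "t \<notin> P"
    \<comment> \<open>then two elements of \<open>P\<close> lie strictly between \<open>t\<close> and \<open>t + \<delta>\<close>, and their difference violates the gap\<close>
    obtain a where a: "a \<in> P" "a < t + \<delta>"
      using cInf_less_iff[OF \<open>P \<noteq> {}\<close> \<open>bdd_below P\<close>, of "t + \<delta>"] \<open>\<delta> > 0\<close> unfolding t_def by auto
    have "t < a" using t_le[OF a(1)] a(1) \<open>t \<notin> P\<close> by (cases "a = t") auto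
    then obtain b where b: "b \<in> P" "b < a"
      using cInf_less_iff[OF \<open>P \<noteq> {}\<close> \<open>bdd_below P\<close>, of a] unfolding t_def by auto
    have "t < b" using t_le[OF b(1)] b(1) \<open>t \<notin> P\<close> by (cases "b = t") auto
    have "a - b \<in> G" using a b diff unfolding P_def by auto
    thus False using gap[of "a - b"] a b \<open>t < b\<close> by auto
  qed
  thus ?thesis using that t_le unfolding P_def by auto
qed

lemma subgroup_of_reals_with_gap:
  fixes G :: "real set"
  assumes one: "1 \<in> G" and diff: "\<And>a b. a \<in> G \<Longrightarrow> b \<in> G \<Longrightarrow> a - b \<in> G"
    and gap: "\<And>g. g \<in> G \<Longrightarrow> 0 < g \<Longrightarrow> \<delta> \<le> g" and "\<delta> > 0"
  shows "\<exists>h::nat. h > 0 \<and> 1 / real h \<in> G \<and> (\<forall>g\<in>G. \<exists>k::int. g = of_int k / real h)"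
proof -
  obtain t where t: "t \<in> G" "0 < t" and t_least: "\<And>g. g \<in> G \<Longrightarrow> 0 < g \<Longrightarrow> t \<le> g"
    using least_positive_element_if_gap[OF diff gap \<open>\<delta> > 0\<close> one] by auto
  have zero: "0 \<in> G" using diff[OF one one] by simp
  have int_mult: "of_int k * t \<in> G" for k :: int
  proof (induction k rule: int_induct[where k = 0])
    case base show ?case using zero by simp
  next
    case (step1 i)
    have "of_int i * t - (0 - t) \<in> G" using diff step1.IH diff[OF zero t(1)] by blast
    thus ?case by (simp add: algebra_simps)
  next
    case (step2 i)
    have "of_int i * t - t \<in> G" using diff step2.IH t(1) by blast
    thus ?case by (simp add: algebra_simps)
  qed
  have multiple: "\<exists>k::int. g = of_int k * t" if "g \<in> G" for g
  proof -
    define k where "k = \<lfloor>g / t\<rfloor>"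
    have "of_int k \<le> g / t" "g / t < of_int k + 1" unfolding k_def by linarith+
    hence "of_int k * t \<le> g" "g < (of_int k + 1) * t" using t(2) by (simp_all add: field_simps)
    moreover have "g - of_int k * t \<in> G" using diff[OF that int_mult] .
    ultimately have "\<not> 0 < g - of_int k * t" using t_least[of "g - of_int k * t"] by argo
    thus ?thesis using \<open>of_int k * t \<le> g\<close> by (intro exI[of _ k]) linarith
  qed
  obtain k\<^sub>0 where k\<^sub>0: "1 = of_int k\<^sub>0 * t" using multiple[OF one] by blast
  hence "0 < real_of_int k\<^sub>0" using zero_less_mult_pos2[of "real_of_int k\<^sub>0" t] t(2) by simp
  hence "k\<^sub>0 > 0" by simp
  define h where "h = nat k\<^sub>0"
  have h: "t = 1 / real h" unfolding h_def using k\<^sub>0 \<open>k\<^sub>0 > 0\<close> by (simp add: field_simps)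
  show ?thesis
    using \<open>k\<^sub>0 > 0\<close> t(1) multiple unfolding h by (intro exI[of _ h]) (auto simp: h_def)
qed

section \<open>Barycentric coordinates\<close>

definition edge_matrix :: "nat \<Rightarrow> (nat \<Rightarrow> pt) \<Rightarrow> real mat" where
  "edge_matrix d v = mat d d (\<lambda>(i, j). v (Suc j) i - v 0 i)"

lemma edge_matrix_mult_vec:
  assumes "i < d" "c \<in> carrier_vec d"
  shows "(edge_matrix d v *\<^sub>v c) $ i = (\<Sum>k\<in>{1..d}. c $ (k - 1) * (v k i - v 0 i))"
  using assms unfolding edge_matrix_def
  by (auto simp: sum.atLeast1_atMost_eq scalar_prod_def atLeast0LessThan mult.commute intro!: sum.cong)

lemma det_edge_matrix_nonzero:
  assumes aff: "aff_indep d v" and vR: "\<forall>k\<le>d. v k \<in> Rd d"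
  shows "det (edge_matrix d v) \<noteq> 0"
proof
  assume "det (edge_matrix d v) = 0"
  then obtain c where c: "c \<in> carrier_vec d" "c \<noteq> 0\<^sub>v d" "edge_matrix d v *\<^sub>v c = 0\<^sub>v d"
    using det_0_iff_vec_prod_zero_field[of "edge_matrix d v" d] by (auto simp: edge_matrix_def)
  have "(\<Sum>k\<in>{1..d}. c $ (k - 1) * (v k i - v 0 i)) = 0" for i
  proof (cases "i < d")
    case True
    thus ?thesis using edge_matrix_mult_vec[OF True c(1), where v = v] c(3) by simp
  next
    case False
    thus ?thesis using vR by (auto simp: Rd_def intro!: sum.neutral)
  qed
  hence c0: "\<forall>k\<in>{1..d}. c $ (k - 1) = 0"
    using aff unfolding aff_indep_def by (auto dest: spec[of _ "\<lambda>k. c $ (k - 1)"])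
  have "c $ i = 0" if "i < d" for i
    using bspec[OF c0, of "Suc i"] that by simp
  hence "c = 0\<^sub>v d" using c(1) by (intro eq_vecI) auto
  with c(2) show False by contradiction
qed

lemma aff_indep_edges_span:
  assumes aff: "aff_indep d v" and vR: "\<forall>k\<le>d. v k \<in> Rd d" and x: "x \<in> Rd d"
  shows "\<exists>c. \<forall>i. x i - v 0 i = (\<Sum>k\<in>{1..d}. c k * (v k i - v 0 i))"
proof -
  let ?A = "edge_matrix d v"
  have A: "?A \<in> carrier_mat d d" unfolding edge_matrix_def by simp
  then obtain B where B: "B \<in> carrier_mat d d" "?A * B = 1\<^sub>m d"
    using det_non_zero_imp_unit[OF A det_edge_matrix_nonzero[OF aff vR]]
    unfolding Units_def ring_mat_def by auto
  define y where "y = vec d (\<lambda>i. x i - v 0 i)"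
  define c where "c = B *\<^sub>v y"
  have c: "c \<in> carrier_vec d" unfolding c_def y_def using B by simp
  have "?A *\<^sub>v c = y"
    unfolding c_def using assoc_mult_mat_vec[OF A B(1), of y, symmetric] B(2) y_def by simp
  have "x i - v 0 i = (\<Sum>k\<in>{1..d}. c $ (k - 1) * (v k i - v 0 i))" for i
  proof (cases "i < d")
    case True
    thus ?thesis using edge_matrix_mult_vec[OF True c, where v = v] \<open>?A *\<^sub>v c = y\<close> y_def by simp
  next
    case False
    thus ?thesis using vR x unfolding Rd_def by (auto intro!: sum.neutral)
  qed
  thus ?thesis by (intro exI[of _ "\<lambda>k. c $ (k - 1)"]) blast
qed

lemma sum_atMost_eq_0_plus: fixes d :: nat shows "(\<Sum>k\<le>d. f k) = f 0 + (\<Sum>k\<in>{1..d}. f k)"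
proof -
  have "{..d} = insert 0 {1..d}" by auto
  thus ?thesis by simp
qed

lemma ex_is_bary_if_aff_indep:
  assumes "aff_indep d v" "\<forall>k\<le>d. v k \<in> Rd d" "x \<in> Rd d"
  shows "\<exists>\<mu>. is_bary d v x \<mu>"
proof -
  obtain c where c: "\<And>i. x i - v 0 i = (\<Sum>k\<in>{1..d}. c k * (v k i - v 0 i))"
    using aff_indep_edges_span[OF assms] by blast
  define \<mu> where "\<mu> k = (if k = 0 then 1 - (\<Sum>k\<in>{1..d}. c k) else c k)" for k
  have "(\<Sum>k\<in>{1..d}. \<mu> k * f k) = (\<Sum>k\<in>{1..d}. c k * f k)" for f
    unfolding \<mu>_def by (intro sum.cong) auto
  from this[of "\<lambda>_. 1"] this[of "\<lambda>k. v k _"] have "is_bary d v x \<mu>"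
    unfolding is_bary_def sum_atMost_eq_0_plus[of _ d] using c
    by (auto simp: \<mu>_def algebra_simps sum_subtractf sum_distrib_left)
  thus ?thesis by blast
qed

lemma is_bary_unique_if_aff_indep:
  assumes aff: "aff_indep d v" and a: "is_bary d v x a" and b: "is_bary d v x b" and "k \<le> d"
  shows "a k = b k"
proof -
  define c where "c k = a k - b k" for k
  have c_sum: "(\<Sum>k\<in>{1..d}. c k) = - c 0"
    using a b sum_atMost_eq_0_plus[of a d] sum_atMost_eq_0_plus[of b d]
    unfolding c_def is_bary_def by (simp add: sum_subtractf)
  have c_comb: "(\<Sum>k\<in>{1..d}. c k * v k i) = - c 0 * v 0 i" for i
    using a b sum_atMost_eq_0_plus[of "\<lambda>k. a k * v k i" d] sum_atMost_eq_0_plus[of "\<lambda>k. b k * v k i" d]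
    unfolding c_def is_bary_def by (simp add: sum_subtractf left_diff_distrib)
  have "(\<Sum>k\<in>{1..d}. c k * (v k i - v 0 i)) = 0" for i
    using c_sum c_comb[of i] by (simp add: right_diff_distrib sum_subtractf flip: sum_distrib_right)
  hence "\<forall>k\<in>{1..d}. c k = 0" using aff unfolding aff_indep_def by blast
  moreover from this have "c 0 = 0" using c_sum by simp
  ultimately have "c k = 0" using \<open>k \<le> d\<close> by (cases "k = 0") auto
  thus ?thesis unfolding c_def by simp
qed

lemma is_bary_cong:
  "(\<And>k. k \<le> d \<Longrightarrow> v k = v' k) \<Longrightarrow> (\<And>k. k \<le> d \<Longrightarrow> b k = b' k) \<Longrightarrow>
    is_bary d v x b \<longleftrightarrow> is_bary d v' x b'"
  unfolding is_bary_def by (metis (no_types, lifting) atMost_iff sum.cong)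

lemma is_bary_reindex:
  assumes "bij_betw \<sigma> {..d} {..d}"
  shows "is_bary d (\<lambda>k. v (\<sigma> k)) x (\<lambda>k. b (\<sigma> k)) \<longleftrightarrow> is_bary d v x b"
  unfolding is_bary_def
  using sum.reindex_bij_betw[OF assms, of b] sum.reindex_bij_betw[OF assms, of "\<lambda>k. b k * v k _"]
  by simp

locale bary_frame =
  fixes d :: nat and w :: "nat \<Rightarrow> pt"
  assumes vertex_Rd: "k \<le> d \<Longrightarrow> w k \<in> Rd d"
    and is_bary_unique: "is_bary d w x a \<Longrightarrow> is_bary d w x b \<Longrightarrow> k \<le> d \<Longrightarrow> a k = b k"
    and ex_is_bary: "x \<in> Rd d \<Longrightarrow> \<exists>\<mu>. is_bary d w x \<mu>"

lemma bary_frame_if_aff_indep: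
  "aff_indep d v \<Longrightarrow> (\<And>k. k \<le> d \<Longrightarrow> v k \<in> Rd d) \<Longrightarrow> bary_frame d v"
  by unfold_locales (auto intro: is_bary_unique_if_aff_indep ex_is_bary_if_aff_indep)

lemma bary_frame_reindex:
  assumes "bary_frame d v" and \<iota>: "bij_betw \<iota> {..d} {..d}"
  shows "bary_frame d (\<lambda>k. v (\<iota> k))"
proof -
  interpret bary_frame d v by (fact assms(1))
  define \<sigma> where "\<sigma> = inv_into {..d} \<iota>"
  have \<sigma>: "bij_betw \<sigma> {..d} {..d}" unfolding \<sigma>_def by (rule bij_betw_inv_into[OF \<iota>])
  have \<iota>_\<sigma>: "\<iota> (\<sigma> k) = k" if "k \<le> d" for k
    unfolding \<sigma>_def using \<iota> that by (simp add: bij_betw_imp_surj_on f_inv_into_f)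
  have \<sigma>_\<iota>: "\<sigma> (\<iota> k) = k" if "k \<le> d" for k
    unfolding \<sigma>_def using \<iota> that by (simp add: bij_betw_def inv_into_f_f)
  have \<iota>_le: "\<iota> k \<le> d" if "k \<le> d" for k using \<iota> that by (auto dest: bij_betwE)
  have to_v: "is_bary d v x (\<lambda>k. a (\<sigma> k))" if "is_bary d (\<lambda>k. v (\<iota> k)) x a" for x a
    using that is_bary_reindex[OF \<sigma>, of "\<lambda>k. v (\<iota> k)" x a] is_bary_cong[of d "\<lambda>k. v (\<iota> (\<sigma> k))" v]
    by (simp add: \<iota>_\<sigma>)
  show ?thesis
  proof
    show "v (\<iota> k) \<in> Rd d" if "k \<le> d" for k using vertex_Rd \<iota>_le that by blast
    show "a k = b k" if "is_bary d (\<lambda>k. v (\<iota> k)) x a" "is_bary d (\<lambda>k. v (\<iota> k)) x b" "k \<le> d"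
      for x a b k
      using is_bary_unique[OF to_v[OF that(1)] to_v[OF that(2)] \<iota>_le[OF that(3)]] \<sigma>_\<iota> that(3) by simp
    show "\<exists>\<mu>. is_bary d (\<lambda>k. v (\<iota> k)) x \<mu>" if "x \<in> Rd d" for x
      using ex_is_bary[OF that] is_bary_reindex[OF \<iota>, of v x] by blast
  qed
qed

context bary_frame
begin

lemma is_bary_Rd: "is_bary d w x \<mu> \<Longrightarrow> x \<in> Rd d"
  unfolding is_bary_def Rd_def using vertex_Rd by (auto simp: Rd_def intro!: sum.neutral)

text \<open>The barycentric coordinates of an arbitrary point are assembled from those of the origin
  and the unit vectors, which makes them visibly affine in the point.\<close>

definition origin_bary :: "nat \<Rightarrow> real" where
  "origin_bary = (SOME \<mu>. is_bary d w (\<lambda>_. 0) \<mu>)"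

definition unit_bary :: "nat \<Rightarrow> nat \<Rightarrow> real" where
  "unit_bary j = (SOME \<mu>. is_bary d w (\<lambda>i. if i = j then 1 else 0) \<mu>)"

definition bary :: "pt \<Rightarrow> nat \<Rightarrow> real" where
  "bary x k = origin_bary k + (\<Sum>i<d. x i * (unit_bary i k - origin_bary k))"

lemma is_bary_origin_bary: "is_bary d w (\<lambda>_. 0) origin_bary"
  unfolding origin_bary_def by (rule someI_ex[of "is_bary d w _"], rule ex_is_bary) (simp add: Rd_def)

lemma is_bary_unit_bary: "j < d \<Longrightarrow> is_bary d w (\<lambda>i. if i = j then 1 else 0) (unit_bary j)"
  unfolding unit_bary_def by (rule someI_ex[of "is_bary d w _"], rule ex_is_bary) (simp add: Rd_def)

lemma sum_bary: "(\<Sum>k\<le>d. bary x k) = 1"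
proof -
  have swap: "(\<Sum>k\<le>d. \<Sum>i<d. x i * (unit_bary i k - origin_bary k)) =
      (\<Sum>i<d. \<Sum>k\<le>d. x i * (unit_bary i k - origin_bary k))"
    by (rule sum.swap)
  have "(\<Sum>k\<le>d. bary x k) =
      (\<Sum>k\<le>d. origin_bary k) + (\<Sum>i<d. x i * ((\<Sum>k\<le>d. unit_bary i k) - (\<Sum>k\<le>d. origin_bary k)))"
    unfolding bary_def sum.distrib swap unfolding sum_distrib_left[symmetric] sum_subtractf ..
  also have "\<dots> = 1"
    using is_bary_origin_bary is_bary_unit_bary unfolding is_bary_def by simp
  finally show ?thesis .
qed

lemma bary_comb_eq: "x \<in> Rd d \<Longrightarrow> (\<Sum>k\<le>d. bary x k * w k j) = x j"
proof -
  assume x: "x \<in> Rd d"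
  have origin: "(\<Sum>k\<le>d. origin_bary k * w k j) = 0"
    using is_bary_origin_bary unfolding is_bary_def by metis
  have unit: "(\<Sum>k\<le>d. unit_bary i k * w k j) = (if j = i then 1 else 0)" if "i < d" for i
    using is_bary_unit_bary[OF that] unfolding is_bary_def by metis
  have "(\<Sum>k\<le>d. bary x k * w k j) = (\<Sum>k\<le>d. origin_bary k * w k j) +
      (\<Sum>i<d. x i * ((\<Sum>k\<le>d. unit_bary i k * w k j) - (\<Sum>k\<le>d. origin_bary k * w k j)))"
  proof -
    have "(\<Sum>k\<le>d. (\<Sum>i<d. x i * (unit_bary i k - origin_bary k)) * w k j) =
        (\<Sum>i<d. \<Sum>k\<le>d. x i * ((unit_bary i k - origin_bary k) * w k j))"
      by (subst sum.swap) (simp add: sum_distrib_right mult.assoc)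
    thus ?thesis
      unfolding bary_def distrib_right sum.distrib
      by (simp add: sum_distrib_left sum_subtractf algebra_simps)
  qed
  also have "\<dots> = (\<Sum>i<d. if j = i then x j else 0)"
    unfolding origin add_0 diff_zero by (intro sum.cong) (auto simp: unit)
  also have "\<dots> = x j" using x unfolding Rd_def by (cases "j < d") auto
  finally show ?thesis .
qed

lemma is_bary_bary: "x \<in> Rd d \<Longrightarrow> is_bary d w x (bary x)"
  unfolding is_bary_def using sum_bary bary_comb_eq by simp

lemma bary_eq: "is_bary d w x \<mu> \<Longrightarrow> k \<le> d \<Longrightarrow> bary x k = \<mu> k"
  using is_bary_unique is_bary_bary is_bary_Rd by blast

lemma bary_affine: "bary (\<lambda>j. p j + c * (r j - s j)) k = bary p k + c * (bary r k - bary s k)"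
  unfolding bary_def by (simp add: algebra_simps sum.distrib sum_subtractf sum_distrib_left)

lemma mem_conv_if_bary_nonneg:
  assumes "x \<in> Rd d" "\<And>k. k \<le> d \<Longrightarrow> 0 \<le> bary x k"
  shows "x \<in> conv (w ` {..d})"
proof -
  have "x = (\<lambda>j. \<Sum>k\<le>d. bary x k * w k j)" using bary_comb_eq[OF assms(1)] by simp
  thus ?thesis using convex_comb_mem_conv_image[of "{..d}" "bary x" w] assms(2) sum_bary by simp
qed

definition bary_bound :: real where
  "bary_bound = (\<Sum>k\<le>d. \<Sum>i<d. \<bar>unit_bary i k - origin_bary k\<bar>)"

lemma bary_diff_le:
  assumes "k \<le> d" "0 \<le> e" "\<And>i. i < d \<Longrightarrow> \<bar>y i - x i\<bar> \<le> e"
  shows "\<bar>bary y k - bary x k\<bar> \<le> e * bary_bound"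
proof -
  have "\<bar>bary y k - bary x k\<bar> = \<bar>\<Sum>i<d. (y i - x i) * (unit_bary i k - origin_bary k)\<bar>"
    unfolding bary_def by (simp add: left_diff_distrib sum_subtractf)
  also have "\<dots> \<le> (\<Sum>i<d. e * \<bar>unit_bary i k - origin_bary k\<bar>)"
    using assms(3) by (intro sum_abs[THEN order_trans] sum_mono) (auto simp: abs_mult mult_right_mono)
  also have "\<dots> \<le> e * bary_bound"
  proof -
    have "(\<Sum>i<d. \<bar>unit_bary i k - origin_bary k\<bar>) \<le> bary_bound"
      unfolding bary_bound_def using assms(1) by (intro member_le_sum) (auto intro: sum_nonneg)
    thus ?thesis using assms(2) by (simp add: sum_distrib_left[symmetric] mult_left_mono)
  qed
  finally show ?thesis .
qed

lemma mem_interior_if_bary_pos: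
  assumes x: "x \<in> Rd d" and pos: "\<And>k. k \<le> d \<Longrightarrow> 0 < bary x k"
  shows "x \<in> interior_d d (conv (w ` {..d}))"
proof -
  define \<eta> where "\<eta> = Min (bary x ` {..d})"
  have "0 < \<eta>" unfolding \<eta>_def using pos by (subst Min_gr_iff) auto
  have \<eta>_le: "\<eta> \<le> bary x k" if "k \<le> d" for k unfolding \<eta>_def using that by (intro Min_le) auto
  have "0 \<le> bary_bound" unfolding bary_bound_def by (auto intro: sum_nonneg)
  define e where "e = \<eta> / (bary_bound + 1)"
  have "0 < e" "e * bary_bound < \<eta>"
    unfolding e_def using \<open>0 < \<eta>\<close> \<open>0 \<le> bary_bound\<close> by (simp_all add: field_simps)
  have "y \<in> conv (w ` {..d})" if y: "y \<in> Rd d" and dist: "(\<Sum>i<d. (y i - x i)\<^sup>2) < e\<^sup>2" for y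
  proof (rule mem_conv_if_bary_nonneg[OF y])
    have close: "\<bar>y i - x i\<bar> \<le> e" if "i < d" for i
    proof -
      have "(y i - x i)\<^sup>2 \<le> (\<Sum>i<d. (y i - x i)\<^sup>2)" using that by (intro member_le_sum) auto
      thus ?thesis using dist \<open>0 < e\<close> abs_le_square_iff[of "y i - x i" e] by simp
    qed
    show "0 \<le> bary y k" if "k \<le> d" for k
    proof -
      have "\<bar>bary y k - bary x k\<bar> \<le> e * bary_bound"
        by (rule bary_diff_le[OF that]) (use close \<open>0 < e\<close> in auto)
      thus ?thesis using \<eta>_le[OF that] \<open>e * bary_bound < \<eta>\<close> by linarith
    qed
  qed
  thus ?thesis unfolding interior_d_def using x \<open>0 < e\<close> by blast
qed

end

section \<open>Coordinates adapted to the Sylvester weights\<close>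

lemma Zd_affine_comb:
  assumes "p \<in> Zd d" "r \<in> Zd d" "s \<in> Zd d" "c \<in> \<int>"
  shows "(\<lambda>j. p j + c * (r j - s j)) \<in> Zd d"
  using assms unfolding Zd_def Rd_def by (auto intro: Ints_add Ints_mult Ints_diff)

locale sylvester_simplex = bary_frame d w
  for d :: nat and w :: "nat \<Rightarrow> pt" +
  fixes n :: nat and z :: pt
  assumes d_eq: "d = Suc n"
    and vertex_Zd: "k \<le> d \<Longrightarrow> w k \<in> Zd d"
    and interior_lattice: "interior_d d (conv (w ` {..d})) \<inter> Zd d = {z}"
    and z_bary: "is_bary d w z (target_bary d)"
begin

definition syl :: "nat \<Rightarrow> real" where
  "syl i = real (sylvester (Suc i))"

definition Q :: real where
  "Q = (\<Prod>j\<in>{1..<d}. real (sylvester j))"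

definition cof :: "nat \<Rightarrow> real" where
  "cof i = real (sylvester_cofactor d (Suc i))"

definition mid :: pt where
  "mid j = (w n j + w (Suc n) j) / 2"

definition dir :: "nat \<Rightarrow> pt" where
  "dir i j = (w i j - mid j) / syl i"

definition half_edge :: pt where
  "half_edge j = w n j - mid j"

text \<open>Affine coordinates centred at \<open>mid\<close>: \<open>w i\<close> (\<open>i < n\<close>) has \<open>coord = syl i \<cdot> e\<^sub>i\<close> and
  \<open>height = 0\<close>, while \<open>w n\<close> and \<open>w (Suc n)\<close> have \<open>coord = 0\<close> and \<open>height = \<plusminus>1\<close>.\<close>

definition coord :: "pt \<Rightarrow> nat \<Rightarrow> real" where
  "coord x i = syl i * bary x i"

definition height :: "pt \<Rightarrow> real" where
  "height x = bary x n - bary x (Suc n)"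

definition point :: "(nat \<Rightarrow> real) \<Rightarrow> real \<Rightarrow> pt" where
  "point \<rho> t j = mid j + (\<Sum>i<n. \<rho> i * dir i j) + t * half_edge j"

definition point_bary :: "(nat \<Rightarrow> real) \<Rightarrow> real \<Rightarrow> nat \<Rightarrow> real" where
  "point_bary \<rho> t k =
    (if k < n then \<rho> k / syl k
     else if k = n then (1 - (\<Sum>i<n. \<rho> i / syl i) + t) / 2
     else (1 - (\<Sum>i<n. \<rho> i / syl i) - t) / 2)"

lemma syl_pos: "0 < syl i"
  unfolding syl_def using sylvester_ge_2[of "Suc i"] by simp

lemma Q_pos: "0 < Q"
  unfolding Q_def using sylvester_ge_2 by (intro prod_pos) (auto intro: order.strict_trans2[of 0 2])

lemma Q_eq_syl_cof: "i < n \<Longrightarrow> Q = syl i * cof i"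
  unfolding Q_def syl_def cof_def using prod_sylvester_eq_mult_cofactor[of "Suc i" d] d_eq
  by (simp flip: of_nat_prod of_nat_mult)

lemma target_bary_less: "k < n \<Longrightarrow> target_bary d k = 1 / syl k"
  unfolding target_bary_def syl_def using d_eq by simp

lemma target_bary_last: "\<not> k < n \<Longrightarrow> target_bary d k = 1 / (2 * Q)"
proof -
  assume "\<not> k < n"
  moreover have "real (sylvester d) - 1 = Q"
    unfolding Q_def using sylvester_eq_prod_plus_1[of d] d_eq by simp
  ultimately show ?thesis unfolding target_bary_def using d_eq by simp
qed

lemma sum_atMost_d: "(\<Sum>k\<le>d. f k) = (\<Sum>k<n. f k) + f n + (f (Suc n) :: real)"
  unfolding d_eq by (simp add: lessThan_Suc_atMost[symmetric] add.commute add.left_commute)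

lemma point_bary_n: "point_bary \<rho> t n = (1 - (\<Sum>i<n. \<rho> i / syl i) + t) / 2"
  and point_bary_Suc_n: "point_bary \<rho> t (Suc n) = (1 - (\<Sum>i<n. \<rho> i / syl i) - t) / 2"
  unfolding point_bary_def by auto

lemma sum_point_bary: "(\<Sum>k\<le>d. point_bary \<rho> t k) = 1"
proof -
  have "(\<Sum>k<n. point_bary \<rho> t k) = (\<Sum>i<n. \<rho> i / syl i)"
    unfolding point_bary_def by (intro sum.cong) auto
  moreover have "S + (1 - S + t) / 2 + (1 - S - t) / 2 = 1" for S :: real
    by (simp add: field_simps)
  ultimately show ?thesis unfolding sum_atMost_d point_bary_n point_bary_Suc_n by metis
qed

lemma point_eq_comb: "point \<rho> t j = (\<Sum>k\<le>d. point_bary \<rho> t k * w k j)"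
proof -
  let ?S = "\<Sum>i<n. \<rho> i / syl i"
  have "(\<Sum>i<n. \<rho> i * dir i j) = (\<Sum>i<n. \<rho> i / syl i * w i j - \<rho> i / syl i * mid j)"
    unfolding dir_def by (intro sum.cong) (auto simp: diff_divide_distrib algebra_simps)
  also have "\<dots> = (\<Sum>i<n. \<rho> i / syl i * w i j) - ?S * mid j"
    by (simp add: sum_subtractf sum_distrib_right)
  finally have dir_sum: "(\<Sum>i<n. \<rho> i * dir i j) = (\<Sum>i<n. \<rho> i / syl i * w i j) - ?S * mid j" .
  have small: "(\<Sum>k<n. point_bary \<rho> t k * w k j) = (\<Sum>i<n. \<rho> i / syl i * w i j)"
    unfolding point_bary_def by (intro sum.cong) auto
  have "(a + b) / 2 + (X - S * ((a + b) / 2)) + t * (a - (a + b) / 2) =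
      X + (1 - S + t) / 2 * a + (1 - S - t) / 2 * b" for X S a b :: real
    by (simp add: field_simps)
  thus ?thesis
    unfolding point_def dir_sum sum_atMost_d small point_bary_n point_bary_Suc_n half_edge_def mid_def .
qed

lemma is_bary_point: "is_bary d w (point \<rho> t) (point_bary \<rho> t)"
  unfolding is_bary_def using sum_point_bary point_eq_comb by blast

lemma point_Rd: "point \<rho> t \<in> Rd d"
  using is_bary_point by (rule is_bary_Rd)

lemma bary_point: "k \<le> d \<Longrightarrow> bary (point \<rho> t) k = point_bary \<rho> t k"
  using is_bary_point by (rule bary_eq)

lemma coord_point: "i < n \<Longrightarrow> coord (point \<rho> t) i = \<rho> i"
  unfolding coord_def using bary_point[of i] syl_pos[of i] d_eq by (simp add: point_bary_def)

lemma height_point: "height (point \<rho> t) = t"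
  unfolding height_def using bary_point[of n \<rho> t] bary_point[of "Suc n" \<rho> t] d_eq
  by (simp add: point_bary_n point_bary_Suc_n field_simps)

lemma point_bary_coord_height:
  assumes "k \<le> d"
  shows "point_bary (coord x) (height x) k = bary x k"
proof -
  have S: "(\<Sum>i<n. coord x i / syl i) = (\<Sum>i<n. bary x i)"
    unfolding coord_def using syl_pos by (intro sum.cong) (auto simp: less_imp_neq[symmetric])
  have split: "(\<Sum>k<n. bary x k) + bary x n + bary x (Suc n) = 1"
    using sum_bary[of x] sum_atMost_d[of "bary x"] by simp
  consider "k < n" | "k = n" | "k = Suc n" using assms d_eq by linarith
  thus ?thesis
  proof cases
    case 1
    thus ?thesis unfolding point_bary_def coord_def using syl_pos[of k] by simp
  next
    case 2
    show ?thesis unfolding 2 point_bary_n S height_def using split by simp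
  next
    case 3
    show ?thesis unfolding 3 point_bary_Suc_n S height_def using split by simp
  qed
qed

lemma point_coord_height:
  assumes "x \<in> Rd d"
  shows "point (coord x) (height x) = x"
proof
  fix j
  have "point (coord x) (height x) j = (\<Sum>k\<le>d. bary x k * w k j)"
    unfolding point_eq_comb by (intro sum.cong) (simp_all add: point_bary_coord_height)
  thus "point (coord x) (height x) j = x j" using bary_comb_eq[OF assms] by simp
qed

lemma point_cong: "(\<And>i. i < n \<Longrightarrow> \<rho> i = \<rho>' i) \<Longrightarrow> point \<rho> t = point \<rho>' t"
  unfolding point_def by (auto intro!: sum.cong)

lemma cof_plus_1_div_syl_Ints: "i < n \<Longrightarrow> (1 + cof i) / syl i \<in> \<int>"
proof -
  assume "i < n"
  then obtain l where "sylvester_cofactor d (Suc i) + 1 = sylvester (Suc i) * l"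
    using sylvester_dvd_cofactor_plus_1[of "Suc i" d] d_eq by auto
  hence "1 + cof i = syl i * real l"
    unfolding cof_def syl_def by (metis add.commute of_nat_1 of_nat_add of_nat_mult)
  thus ?thesis using syl_pos[of i] by simp
qed

lemma cof_div_syl_Ints: "i < n \<Longrightarrow> l < n \<Longrightarrow> i \<noteq> l \<Longrightarrow> cof l / syl i \<in> \<int>"
proof -
  assume "i < n" "l < n" "i \<noteq> l"
  then obtain r where "sylvester_cofactor d (Suc l) = sylvester (Suc i) * r"
    using sylvester_dvd_cofactor[of "Suc i" d "Suc l"] d_eq by auto
  hence "cof l = syl i * real r" unfolding cof_def syl_def by simp
  thus ?thesis using syl_pos[of i] by simp
qed

lemma vertex_Ints: "k \<le> d \<Longrightarrow> i < d \<Longrightarrow> w k i \<in> \<int>"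
  using vertex_Zd unfolding Zd_def by auto

lemma z_Zd: "z \<in> Zd d"
  using interior_lattice by auto

lemma z_eq: "z j = (\<Sum>i<n. w i j / syl i) + mid j / Q"
proof -
  have "z j = (\<Sum>k<n. target_bary d k * w k j) + target_bary d n * w n j
      + target_bary d (Suc n) * w (Suc n) j"
    using z_bary sum_atMost_d unfolding is_bary_def by simp
  moreover have "(\<Sum>k<n. target_bary d k * w k j) = (\<Sum>i<n. w i j / syl i)"
    using target_bary_less by (intro sum.cong) auto
  moreover have "target_bary d n * w n j + target_bary d (Suc n) * w (Suc n) j = mid j / Q"
    using target_bary_last[of n] target_bary_last[of "Suc n"] unfolding mid_def
    by (simp add: add_divide_distrib)
  ultimately show ?thesis by linarith
qed

text \<open>Clearing denominators in the barycentric expansion of \<open>z\<close> exhibits \<open>mid\<close>, and then every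
  \<open>dir i\<close>, as an integral combination of lattice points; the congruences
  \<open>cof i \<equiv> -1 (mod syl i)\<close> and \<open>cof l \<equiv> 0 (mod syl i)\<close> for \<open>l \<noteq> i\<close> are what make \<open>dir i\<close> integral.\<close>

lemma mid_eq: "mid j = Q * z j - (\<Sum>i<n. cof i * w i j)"
proof -
  have "Q * z j = (\<Sum>i<n. Q * (w i j / syl i)) + mid j"
    unfolding z_eq using Q_pos by (simp add: sum_distrib_left distrib_left)
  also have "(\<Sum>i<n. Q * (w i j / syl i)) = (\<Sum>i<n. cof i * w i j)"
    using Q_eq_syl_cof syl_pos by (intro sum.cong) (auto simp: less_imp_neq[symmetric])
  finally show ?thesis by simp
qed

lemma mid_Zd: "mid \<in> Zd d"
proof -
  have "mid \<in> Rd d" using vertex_Rd d_eq unfolding Rd_def mid_def by auto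
  moreover have "Q \<in> \<int>" "cof i \<in> \<int>" for i unfolding Q_def cof_def by auto
  ultimately show ?thesis
    unfolding Zd_def mid_eq using z_Zd vertex_Ints d_eq
    by (auto simp: Zd_def intro!: Ints_diff Ints_mult Ints_sum)
qed

lemma dir_eq:
  assumes "i < n"
  shows "dir i j = (1 + cof i) / syl i * w i j + (\<Sum>l\<in>{..<n}-{i}. cof l / syl i * w l j) - cof i * z j"
proof -
  have split: "(\<Sum>l<n. cof l * w l j) = cof i * w i j + (\<Sum>l\<in>{..<n}-{i}. cof l * w l j)"
    using assms by (simp add: sum.remove)
  have "dir i j = ((1 + cof i) * w i j + (\<Sum>l\<in>{..<n}-{i}. cof l * w l j) - syl i * cof i * z j) / syl i"
    unfolding dir_def mid_eq split Q_eq_syl_cof[OF assms] by (simp add: algebra_simps)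
  also have "\<dots> = (1 + cof i) / syl i * w i j + (\<Sum>l\<in>{..<n}-{i}. cof l * w l j) / syl i - cof i * z j"
    using syl_pos[of i] by (simp add: field_simps)
  finally show ?thesis by (simp add: sum_divide_distrib)
qed

lemma dir_Zd: "i < n \<Longrightarrow> dir i \<in> Zd d"
proof -
  assume i: "i < n"
  have "dir i \<in> Rd d" using mid_Zd vertex_Rd i d_eq unfolding Zd_def Rd_def dir_def by auto
  moreover have "dir i j \<in> \<int>" if "j < d" for j
  proof -
    have "(\<Sum>l\<in>{..<n}-{i}. cof l / syl i * w l j) \<in> \<int>"
      using cof_div_syl_Ints[OF i] vertex_Ints that d_eq by (intro Ints_sum Ints_mult) auto
    moreover have "cof i \<in> \<int>" unfolding cof_def by simp
    ultimately show ?thesis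
      unfolding dir_eq[OF i] using cof_plus_1_div_syl_Ints[OF i] vertex_Ints z_Zd i that d_eq
      by (intro Ints_diff Ints_add Ints_mult) (auto simp: Zd_def)
  qed
  ultimately show ?thesis unfolding Zd_def by blast
qed

lemma half_edge_Zd: "half_edge \<in> Zd d"
  using mid_Zd vertex_Zd[of n] d_eq unfolding Zd_def Rd_def half_edge_def by (auto intro: Ints_diff)

lemma point_Zd:
  assumes x: "x \<in> Zd d" and \<rho>: "\<And>i. i < n \<Longrightarrow> \<rho> i - coord x i \<in> \<int>" and t: "t - height x \<in> \<int>"
  shows "point \<rho> t \<in> Zd d"
proof -
  have "point \<rho> t j = x j + (\<Sum>i<n. (\<rho> i - coord x i) * dir i j) + (t - height x) * half_edge j" for j
    using point_coord_height[of x] x unfolding Zd_def point_def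
    by (auto simp: algebra_simps sum_subtractf dest: fun_cong[of _ _ j])
  hence "point \<rho> t j \<in> \<int>" if "j < d" for j
    using x \<rho> t dir_Zd half_edge_Zd that unfolding Zd_def by (auto intro!: Ints_add Ints_sum Ints_mult)
  thus ?thesis using point_Rd unfolding Zd_def by blast
qed

lemma coord_affine: "coord (\<lambda>j. p j + c * (r j - s j)) i = coord p i + c * (coord r i - coord s i)"
  unfolding coord_def bary_affine by (simp add: algebra_simps)

lemma height_affine: "height (\<lambda>j. p j + c * (r j - s j)) = height p + c * (height r - height s)"
  unfolding height_def bary_affine by (simp add: algebra_simps)

lemma mid_eq_point: "mid = point (\<lambda>_. 0) 0"
  unfolding point_def by simp

lemma vertex_n_eq_point: "w n = point (\<lambda>_. 0) 1"
  unfolding point_def half_edge_def by simp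

lemma coord_mid: "i < n \<Longrightarrow> coord mid i = 0"
  unfolding mid_eq_point by (simp add: coord_point)

lemma height_mid: "height mid = 0"
  unfolding mid_eq_point by (simp add: height_point)

text \<open>The reflection \<open>z + mid - x\<close> of a lattice point \<open>x\<close> in this box has positive barycentric
  coordinates, so it is an interior lattice point and hence equals \<open>z\<close>.\<close>

lemma bary_reflection_pos:
  assumes coord: "\<And>i. i < n \<Longrightarrow> 0 \<le> coord x i \<and> coord x i < 1"
    and height: "0 \<le> height x" "height x < 1 / Q" and k: "k \<le> d"
  shows "0 < bary (\<lambda>j. z j + 1 * (mid j - x j)) k" (is "0 < bary ?u k")
proof -
  let ?S = "\<Sum>i<n. coord x i / syl i"
  have S: "0 \<le> ?S"
    using coord syl_pos by (intro sum_nonneg divide_nonneg_pos) auto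
  have bary_u: "bary ?u k = target_bary d k + point_bary (\<lambda>_. 0) 0 k - point_bary (coord x) (height x) k"
    unfolding bary_affine bary_eq[OF z_bary k] mid_eq_point bary_point[OF k]
      point_bary_coord_height[OF k] by simp
  consider "k < n" | "k = n" | "k = Suc n" using k d_eq by linarith
  thus ?thesis
  proof cases
    case 1
    thus ?thesis using coord[OF 1] syl_pos[of k] bary_u
      by (simp add: target_bary_less point_bary_def diff_divide_distrib[symmetric])
  next
    case 2
    have "bary ?u k = (1 / (2 * Q) - height x / 2) + ?S / 2"
      using bary_u unfolding 2 by (simp add: target_bary_last point_bary_n field_simps)
    moreover have "0 < 1 / (2 * Q) - height x / 2" using height(2) Q_pos by (simp add: field_simps)
    ultimately show ?thesis using S by simp
  next
    case 3
    have "bary ?u k = 1 / (2 * Q) + (?S + height x) / 2"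
      using bary_u unfolding 3 by (simp add: target_bary_last point_bary_Suc_n field_simps)
    moreover have "0 < 1 / (2 * Q)" using Q_pos by simp
    ultimately show ?thesis using S height(1) by (simp add: add_pos_nonneg)
  qed
qed

lemma lattice_point_in_box_eq_mid:
  assumes x: "x \<in> Zd d" and coord: "\<And>i. i < n \<Longrightarrow> 0 \<le> coord x i \<and> coord x i < 1"
    and height: "0 \<le> height x" "height x < 1 / Q"
  shows "x = mid"
proof -
  define u where "u = (\<lambda>j. z j + 1 * (mid j - x j))"
  have "u \<in> Zd d" unfolding u_def by (rule Zd_affine_comb[OF z_Zd mid_Zd x]) simp
  moreover have "0 < bary u k" if "k \<le> d" for k
    unfolding u_def using bary_reflection_pos[OF coord height that] .
  ultimately have "u \<in> interior_d d (conv (w ` {..d}))"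
    by (intro mem_interior_if_bary_pos) (auto simp: Zd_def)
  hence "u = z" using interior_lattice \<open>u \<in> Zd d\<close> by blast
  show ?thesis
  proof
    fix j
    have "u j = z j" using \<open>u = z\<close> by simp
    thus "x j = mid j" unfolding u_def by simp
  qed
qed

lemma frac_diff_Ints: "frac a - a \<in> \<int>"
  unfolding frac_def by simp

lemma coord_Ints_if_height_0:
  assumes x: "x \<in> Zd d" and "height x = 0" "i < n"
  shows "coord x i \<in> \<int>"
proof -
  define y where "y = point (\<lambda>i. frac (coord x i)) 0"
  have "y \<in> Zd d"
    unfolding y_def by (rule point_Zd[OF x]) (use frac_diff_Ints \<open>height x = 0\<close> in auto)
  hence "y = mid"
    by (rule lattice_point_in_box_eq_mid) (auto simp: y_def coord_point height_point frac_lt_1 Q_pos)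
  have "frac (coord x i) = coord y i" unfolding y_def using coord_point[OF \<open>i < n\<close>] by simp
  hence "frac (coord x i) = 0" using \<open>y = mid\<close> coord_mid[OF \<open>i < n\<close>] by simp
  thus ?thesis by (simp add: frac_eq_0_iff)
qed

lemma height_ge_if_pos:
  assumes x: "x \<in> Zd d" and "0 < height x"
  shows "1 / Q \<le> height x"
proof (rule ccontr)
  assume "\<not> 1 / Q \<le> height x"
  define y where "y = point (\<lambda>i. frac (coord x i)) (height x)"
  have "y \<in> Zd d" unfolding y_def by (rule point_Zd[OF x]) (use frac_diff_Ints in auto)
  hence "y = mid"
    by (rule lattice_point_in_box_eq_mid)
      (use \<open>0 < height x\<close> \<open>\<not> 1 / Q \<le> height x\<close> in \<open>auto simp: y_def coord_point height_point frac_lt_1\<close>)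
  hence "height y = 0" using height_mid by simp
  thus False using \<open>0 < height x\<close> unfolding y_def height_point by simp
qed

lemma lattice_heights:
  obtains h :: nat and x\<^sub>1 where "h > 0" "x\<^sub>1 \<in> Zd d" "height x\<^sub>1 = 1 / real h"
    "\<And>x. x \<in> Zd d \<Longrightarrow> \<exists>k::int. height x = of_int k / real h"
proof -
  let ?G = "height ` Zd d"
  have "w n \<in> Zd d" using vertex_Zd d_eq by simp
  moreover have "height (w n) = 1" unfolding vertex_n_eq_point by (rule height_point)
  ultimately have one: "1 \<in> ?G" by (metis image_eqI)
  have diff: "a - b \<in> ?G" if ab: "a \<in> ?G" "b \<in> ?G" for a b
  proof -
    obtain x y where xy: "x \<in> Zd d" "y \<in> Zd d" "a = height x" "b = height y" using ab by blast
    have "(\<lambda>j. x j + 1 * (mid j - y j)) \<in> Zd d"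
      using Zd_affine_comb[OF xy(1) mid_Zd xy(2) Ints_1] .
    moreover have "height (\<lambda>j. x j + 1 * (mid j - y j)) = a - b"
      unfolding height_affine height_mid xy(3,4) by simp
    ultimately show ?thesis
      using rev_image_eqI[of "\<lambda>j. x j + 1 * (mid j - y j)" "Zd d" "a - b" height] by simp
  qed
  have gap: "1 / Q \<le> g" if "g \<in> ?G" "0 < g" for g
    using that height_ge_if_pos by blast
  obtain h :: nat where h: "h > 0" "1 / real h \<in> ?G" "\<forall>g\<in>?G. \<exists>k::int. g = of_int k / real h"
    using subgroup_of_reals_with_gap[OF one diff gap] Q_pos by auto
  from h(2) obtain x\<^sub>1 where "x\<^sub>1 \<in> Zd d" "height x\<^sub>1 = 1 / real h" by (metis imageE)
  thus ?thesis using that h(1,3) by blast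
qed

end

section \<open>The unimodular normal form\<close>

text \<open>\<open>normal_map\<close> sends \<open>x\<^sub>1\<close> to the lattice point \<open>((a - lift) / h, 1)\<close>; this is why it preserves
  the lattice, and reducing \<open>lift\<close> modulo \<open>h\<close> is what puts \<open>a\<close> into \<open>{0, \<dots>, h - 1}\<close>.\<close>

locale sylvester_normal_form = sylvester_simplex +
  fixes h :: nat and x\<^sub>1 :: pt
  assumes h_pos: "h > 0" and x\<^sub>1_Zd: "x\<^sub>1 \<in> Zd d" and height_x\<^sub>1: "height x\<^sub>1 = 1 / real h"
    and height_Zd: "x \<in> Zd d \<Longrightarrow> \<exists>k::int. height x = of_int k / real h"
begin

definition lift :: "nat \<Rightarrow> int" where
  "lift i = \<lfloor>- real h * coord x\<^sub>1 i\<rfloor>"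

definition a :: "nat \<Rightarrow> int" where
  "a i = lift i mod int h"

definition normal_map :: "pt \<Rightarrow> pt" where
  "normal_map x j =
    (if j < n then coord x j + height x * of_int (a j) else if j = n then real h * height x else 0)"

definition normal_map_inv :: "pt \<Rightarrow> pt" where
  "normal_map_inv y = point (\<lambda>i. y i - y n / real h * of_int (a i)) (y n / real h)"

lemma h_real_pos: "0 < real h"
  using h_pos by simp

lemma coord_x\<^sub>1: "i < n \<Longrightarrow> coord x\<^sub>1 i = - of_int (lift i) / real h"
proof -
  assume i: "i < n"
  define y where "y = (\<lambda>j. w n j + (- real h) * (x\<^sub>1 j - mid j))"
  have "y \<in> Zd d"
    unfolding y_def using vertex_Zd[of n] d_eq by (intro Zd_affine_comb[OF _ x\<^sub>1_Zd mid_Zd]) auto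
  moreover have "height y = 0"
    unfolding y_def height_affine height_mid height_x\<^sub>1 vertex_n_eq_point height_point using h_pos by simp
  ultimately have "coord y i \<in> \<int>" using coord_Ints_if_height_0 i by blast
  moreover have "coord y i = - real h * coord x\<^sub>1 i"
    unfolding y_def coord_affine coord_mid[OF i] vertex_n_eq_point coord_point[OF i] by simp
  ultimately have "of_int (lift i) = - real h * coord x\<^sub>1 i"
    unfolding lift_def by (metis floor_of_int Ints_cases)
  thus ?thesis using h_real_pos by (simp add: field_simps)
qed

lemma a_bounds: "0 \<le> a i \<and> a i < int h"
  unfolding a_def using h_pos by simp

lemma lift_minus_a_div_Ints: "(of_int (lift i) - of_int (a i)) / real h \<in> \<int>"
proof -
  have "lift i - a i = int h * (lift i div int h)"
    unfolding a_def by (simp add: minus_mod_eq_mult_div)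
  hence "real_of_int (lift i) - real_of_int (a i) = real h * real_of_int (lift i div int h)"
    by (metis of_int_diff of_int_mult of_int_of_nat_eq)
  thus ?thesis using h_real_pos by simp
qed

lemma normal_map_Rd: "normal_map x \<in> Rd d"
  unfolding Rd_def normal_map_def using d_eq by auto

lemma normal_map_Zd:
  assumes x: "x \<in> Zd d"
  shows "normal_map x \<in> Zd d"
proof -
  obtain k :: int where k: "height x = of_int k / real h" using height_Zd[OF x] by blast
  define y where "y = (\<lambda>j. x j + (- of_int k) * (x\<^sub>1 j - mid j))"
  have "y \<in> Zd d" unfolding y_def by (rule Zd_affine_comb[OF x x\<^sub>1_Zd mid_Zd]) simp
  moreover have "height y = 0" unfolding y_def height_affine height_mid height_x\<^sub>1 k by simp
  ultimately have coord_y: "coord y i \<in> \<int>" if "i < n" for i using coord_Ints_if_height_0 that by blast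
  have "normal_map x i \<in> \<int>" if i: "i < d" for i
  proof (cases "i < n")
    case True
    have "coord y i = coord x i + of_int k * of_int (lift i) / real h"
      unfolding y_def coord_affine coord_mid[OF True] coord_x\<^sub>1[OF True] by simp
    hence "normal_map x i = coord y i - of_int k * ((of_int (lift i) - of_int (a i)) / real h)"
      unfolding normal_map_def k using True h_real_pos by (simp add: field_simps)
    also have "\<dots> \<in> \<int>" using coord_y[OF True] lift_minus_a_div_Ints by (intro Ints_diff Ints_mult) auto
    finally show ?thesis .
  next
    case False
    hence "i = n" using i d_eq by simp
    thus ?thesis unfolding normal_map_def k using h_real_pos by simp
  qed
  thus ?thesis using normal_map_Rd unfolding Zd_def by auto
qed

lemma normal_map_inv_Rd: "normal_map_inv y \<in> Rd d"
  unfolding normal_map_inv_def by (rule point_Rd)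

lemma normal_map_normal_map_inv: "y \<in> Rd d \<Longrightarrow> normal_map (normal_map_inv y) = y"
proof
  fix j assume y: "y \<in> Rd d"
  consider "j < n" | "j = n" | "j > n" by linarith
  thus "normal_map (normal_map_inv y) j = y j"
  proof cases
    case 1
    thus ?thesis unfolding normal_map_def normal_map_inv_def coord_point[OF 1] height_point by simp
  next
    case 2
    thus ?thesis unfolding normal_map_def normal_map_inv_def height_point using h_real_pos by simp
  next
    case 3
    thus ?thesis using y d_eq unfolding normal_map_def Rd_def by simp
  qed
qed

lemma normal_map_inv_Zd:
  assumes y: "y \<in> Zd d"
  shows "normal_map_inv y \<in> Zd d"
proof -
  obtain k where k: "y n = of_int k" using y d_eq unfolding Zd_def by (auto elim: Ints_cases)
  define p where "p = (\<lambda>j. mid j + of_int k * (x\<^sub>1 j - mid j))"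
  have "p \<in> Zd d" unfolding p_def by (rule Zd_affine_comb[OF mid_Zd x\<^sub>1_Zd mid_Zd]) simp
  thus ?thesis unfolding normal_map_inv_def
  proof (rule point_Zd)
    fix i assume i: "i < n"
    have "coord p i = - of_int k * of_int (lift i) / real h"
      unfolding p_def coord_affine coord_mid[OF i] coord_x\<^sub>1[OF i] by simp
    hence "y i - y n / real h * of_int (a i) - coord p i
        = y i + of_int k * ((of_int (lift i) - of_int (a i)) / real h)"
      unfolding k using h_real_pos by (simp add: field_simps)
    also have "\<dots> \<in> \<int>"
      using y i d_eq lift_minus_a_div_Ints unfolding Zd_def by (intro Ints_add Ints_mult) auto
    finally show "y i - y n / real h * of_int (a i) - coord p i \<in> \<int>" .
  next
    show "y n / real h - height p \<in> \<int>"
      unfolding p_def height_affine height_mid height_x\<^sub>1 k by simp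
  qed
qed

lemma normal_map_inj_on: "inj_on normal_map (Rd d)"
proof
  fix x y assume x: "x \<in> Rd d" and y: "y \<in> Rd d" and eq: "normal_map x = normal_map y"
  have "height x = height y"
    using fun_cong[OF eq, of n] h_real_pos unfolding normal_map_def by simp
  moreover have "coord x i = coord y i" if "i < n" for i
    using fun_cong[OF eq, of i] that \<open>height x = height y\<close> unfolding normal_map_def by simp
  ultimately have "point (coord x) (height x) = point (coord y) (height y)"
    by (metis point_cong)
  thus "x = y" using point_coord_height x y by simp
qed

lemma bij_betw_normal_map: "bij_betw normal_map (Rd d) (Rd d)"
  unfolding bij_betw_def
  using normal_map_inj_on normal_map_Rd normal_map_inv_Rd normal_map_normal_map_inv
  by (metis image_subset_iff subsetI subset_antisym image_eqI)

lemma normal_map_Zd_eq: "normal_map ` Zd d = Zd d"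
proof
  show "normal_map ` Zd d \<subseteq> Zd d" using normal_map_Zd by blast
  show "Zd d \<subseteq> normal_map ` Zd d"
  proof
    fix y assume y: "y \<in> Zd d"
    hence "y = normal_map (normal_map_inv y)"
      using normal_map_normal_map_inv unfolding Zd_def by simp
    thus "y \<in> normal_map ` Zd d" using normal_map_inv_Zd[OF y] by blast
  qed
qed

lemma normal_map_affine:
  "\<exists>(A::nat \<Rightarrow> nat \<Rightarrow> real) (b::pt). \<forall>x\<in>Rd d. \<forall>i<d. normal_map x i = (\<Sum>j<d. A i j * x j) + b i"
proof -
  define D where "D j k = unit_bary j k - origin_bary k" for j k
  define E where "E j = D j n - D j (Suc n)" for j
  have bary_D: "bary x k = origin_bary k + (\<Sum>j<d. x j * D j k)" for x k
    unfolding bary_def D_def ..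
  have height_D: "height x = origin_bary n - origin_bary (Suc n) + (\<Sum>j<d. x j * E j)" for x
    unfolding height_def bary_D E_def by (simp add: algebra_simps sum_subtractf)
  define A where "A i j = (if i < n then syl i * D j i + E j * of_int (a i) else real h * E j)" for i j
  define b where "b i = (if i < n then syl i * origin_bary i + (origin_bary n - origin_bary (Suc n)) * of_int (a i)
      else real h * (origin_bary n - origin_bary (Suc n)))" for i
  have "normal_map x i = (\<Sum>j<d. A i j * x j) + b i" if "i < d" for x i
  proof (cases "i < n")
    case True
    have "(\<Sum>j<d. A i j * x j) = syl i * (\<Sum>j<d. x j * D j i) + of_int (a i) * (\<Sum>j<d. x j * E j)"
      unfolding A_def using True by (simp add: sum.distrib sum_distrib_left algebra_simps)
    thus ?thesis
      unfolding normal_map_def coord_def height_D bary_D b_def using True by (simp add: algebra_simps)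
  next
    case False
    have "(\<Sum>j<d. A i j * x j) = real h * (\<Sum>j<d. x j * E j)"
      unfolding A_def using False by (simp add: sum_distrib_left algebra_simps)
    moreover have "i = n" using False that d_eq by simp
    ultimately show ?thesis
      unfolding normal_map_def height_D b_def using False by (simp add: algebra_simps)
  qed
  thus ?thesis by blast
qed

definition normal_vertex :: "nat \<Rightarrow> pt" where
  "normal_vertex k =
    (if k < n then (\<lambda>j. if j = k then syl k else 0)
     else if k = n then ah_point d a (int h)
     else if k = Suc n then - ah_point d a (int h)
     else (\<lambda>_. 0))"

lemma ah_point_eq: "ah_point d a (int h) j = (if j < n then of_int (a j) else if j = n then real h else 0)"
  unfolding ah_point_def using d_eq by simp

lemma normal_map_comb:
  assumes "sum \<mu> {..d} = 1"
  shows "normal_map (\<lambda>j. \<Sum>k\<le>d. \<mu> k * w k j) = (\<lambda>j. \<Sum>k\<le>d. \<mu> k * normal_vertex k j)"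
proof
  fix j
  let ?x = "\<lambda>j. \<Sum>k\<le>d. \<mu> k * w k j"
  have bary_x: "bary ?x k = \<mu> k" if "k \<le> d" for k
    using assms that by (intro bary_eq) (auto simp: is_bary_def)
  have "(\<Sum>k<n. \<mu> k * (if j = k then syl k else 0)) = (\<Sum>k<n. if k = j then \<mu> j * syl j else 0)"
    by (intro sum.cong) auto
  hence small: "(\<Sum>k<n. \<mu> k * (if j = k then syl k else 0)) = (if j < n then \<mu> j * syl j else 0)"
    by simp
  have "(\<Sum>k\<le>d. \<mu> k * normal_vertex k j) =
      (\<Sum>k<n. \<mu> k * (if j = k then syl k else 0)) + (\<mu> n - \<mu> (Suc n)) * ah_point d a (int h) j"
    unfolding sum_atMost_d normal_vertex_def by (simp add: algebra_simps)
  hence rhs: "(\<Sum>k\<le>d. \<mu> k * normal_vertex k j) =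
      (if j < n then \<mu> j * syl j else 0) + (\<mu> n - \<mu> (Suc n)) * ah_point d a (int h) j"
    unfolding small .
  have bary_n: "bary ?x n = \<mu> n" "bary ?x (Suc n) = \<mu> (Suc n)"
    using bary_x d_eq by auto
  show "normal_map ?x j = (\<Sum>k\<le>d. \<mu> k * normal_vertex k j)"
  proof (cases "j < n")
    case True
    moreover have "bary ?x j = \<mu> j" using bary_x True d_eq by simp
    ultimately show ?thesis
      unfolding rhs normal_map_def coord_def height_def bary_n ah_point_eq by (simp add: algebra_simps)
  next
    case False
    thus ?thesis unfolding rhs normal_map_def height_def bary_n ah_point_eq by (simp add: algebra_simps)
  qed
qed

lemma normal_map_conv: "normal_map ` conv (w ` {..d}) = conv (normal_vertex ` {..d})"
proof (intro equalityI subsetI)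
  fix y assume "y \<in> normal_map ` conv (w ` {..d})"
  then obtain x where "x \<in> conv (w ` {..d})" "y = normal_map x" by blast
  then obtain \<mu> where "\<forall>k\<in>{..d}. 0 \<le> \<mu> k" "sum \<mu> {..d} = 1" "y = normal_map (\<lambda>j. \<Sum>k\<le>d. \<mu> k * w k j)"
    using mem_conv_image_obtain[of "{..d}" x w] by auto
  thus "y \<in> conv (normal_vertex ` {..d})"
    by (simp add: normal_map_comb convex_comb_mem_conv_image)
next
  fix y assume "y \<in> conv (normal_vertex ` {..d})"
  then obtain \<mu> where \<mu>: "\<forall>k\<in>{..d}. 0 \<le> \<mu> k" "sum \<mu> {..d} = 1"
    and y: "y = (\<lambda>j. \<Sum>k\<le>d. \<mu> k * normal_vertex k j)"
    using mem_conv_image_obtain[of "{..d}" y normal_vertex] by auto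
  hence "y = normal_map (\<lambda>j. \<Sum>k\<le>d. \<mu> k * w k j)" by (simp add: normal_map_comb)
  thus "y \<in> normal_map ` conv (w ` {..d})"
    using \<mu> convex_comb_mem_conv_image[of "{..d}" \<mu> w] by blast
qed

text \<open>The extra vertex \<open>normal_vertex (Suc d)\<close> is the origin, the midpoint of
  \<open>normal_vertex n\<close> and \<open>normal_vertex (Suc n)\<close>; its weight is split evenly between them.\<close>

lemma conv_normal_vertex_Suc: "conv (normal_vertex ` {..Suc d}) = conv (normal_vertex ` {..d})"
proof (intro equalityI subsetI)
  fix x assume "x \<in> conv (normal_vertex ` {..Suc d})"
  then obtain \<mu> where \<mu>: "\<forall>k\<in>{..Suc d}. 0 \<le> \<mu> k" "sum \<mu> {..Suc d} = 1"
    and x: "x = (\<lambda>j. \<Sum>k\<le>Suc d. \<mu> k * normal_vertex k j)"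
    using mem_conv_image_obtain[of "{..Suc d}" x normal_vertex] by auto
  define \<delta> where "\<delta> k = (if k = n \<or> k = Suc n then \<mu> (Suc d) / 2 else 0)" for k
  have "sum \<delta> {..d} = \<mu> (Suc d)"
    unfolding sum_atMost_d \<delta>_def by simp
  moreover have "(\<Sum>k\<le>d. \<delta> k * normal_vertex k j) = 0" for j
    unfolding sum_atMost_d \<delta>_def normal_vertex_def by simp
  moreover have "normal_vertex (Suc d) = (\<lambda>_. 0)"
    unfolding normal_vertex_def using d_eq by simp
  ultimately have "x = (\<lambda>j. \<Sum>k\<le>d. (\<mu> k + \<delta> k) * normal_vertex k j)" "sum (\<lambda>k. \<mu> k + \<delta> k) {..d} = 1"
    using x \<mu>(2) by (simp_all add: distrib_right sum.distrib)
  moreover have "\<forall>k\<in>{..d}. 0 \<le> \<mu> k + \<delta> k" using \<mu>(1) by (simp add: \<delta>_def)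
  ultimately show "x \<in> conv (normal_vertex ` {..d})"
    using convex_comb_mem_conv_image[of "{..d}" "\<lambda>k. \<mu> k + \<delta> k" normal_vertex] by simp
next
  show "x \<in> conv (normal_vertex ` {..Suc d})" if "x \<in> conv (normal_vertex ` {..d})" for x
    using conv_mono[OF image_mono[of "{..d}" "{..Suc d}"]] that by auto
qed

lemma normal_vertex_image: "normal_vertex ` {..Suc d} = T_verts d \<union> {ah_point d a (int h), - ah_point d a (int h)}"
proof -
  have "{..Suc d} = {..<n} \<union> {n, Suc n, Suc d}" using d_eq by auto
  moreover have "normal_vertex ` {..<n} = (\<lambda>i j. if j = i - 1 then real (sylvester i) else 0) ` {1..d - 1}"
  proof -
    have "{1..d - 1} = Suc ` {..<n}" using d_eq by (simp add: image_Suc_lessThan)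
    show ?thesis unfolding \<open>{1..d - 1} = Suc ` {..<n}\<close> image_image normal_vertex_def syl_def by (intro image_cong) auto
  qed
  moreover have "normal_vertex n = ah_point d a (int h)" "normal_vertex (Suc n) = - ah_point d a (int h)"
    "normal_vertex (Suc d) = (\<lambda>_. 0)"
    unfolding normal_vertex_def using d_eq by auto
  ultimately show ?thesis unfolding T_verts_def by (simp only: image_Un image_insert image_empty) blast
qed

lemma unimod_equiv_normal_form:
  "unimod_equiv d (conv (w ` {..d})) (conv (T_verts d \<union> {ah_point d a (int h), - ah_point d a (int h)}))"
  unfolding unimod_equiv_def
proof (intro exI[of _ normal_map] conjI)
  show "normal_map ` conv (w ` {..d}) = conv (T_verts d \<union> {ah_point d a (int h), - ah_point d a (int h)})"
    unfolding normal_map_conv normal_vertex_image[symmetric] conv_normal_vertex_Suc ..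
qed (fact bij_betw_normal_map normal_map_affine normal_map_Zd_eq)+

end

context sylvester_simplex
begin

lemma ex_unimod_equiv_normal_form:
  "\<exists>(h::int) (a::nat \<Rightarrow> int). h > 0 \<and> (\<forall>i<d - 1. 0 \<le> a i \<and> a i < h) \<and>
     unimod_equiv d (conv (w ` {..d})) (conv (T_verts d \<union> {ah_point d a h, - ah_point d a h}))"
proof -
  obtain h :: nat and x\<^sub>1 where "h > 0" "x\<^sub>1 \<in> Zd d" "height x\<^sub>1 = 1 / real h"
    "\<And>x. x \<in> Zd d \<Longrightarrow> \<exists>k::int. height x = of_int k / real h"
    using lattice_heights by blast
  then interpret sylvester_normal_form d w n z h x\<^sub>1
    by unfold_locales
  show ?thesis
    using \<open>h > 0\<close> a_bounds unimod_equiv_normal_form by (intro exI[of _ "int h"] exI[of _ a]) auto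
qed

end

lemma lattice_simplex_reorder:
  assumes "lattice_simplex d v" and \<sigma>: "bij_betw \<sigma> {..d} {..d}"
    and z: "is_bary d v z (\<lambda>k. b (\<sigma> k))"
  obtains w where "bary_frame d w" "\<And>k. k \<le> d \<Longrightarrow> w k \<in> Zd d" "w ` {..d} = v ` {..d}"
    "is_bary d w z b"
proof -
  define \<iota> where "\<iota> = inv_into {..d} \<sigma>"
  have \<iota>: "bij_betw \<iota> {..d} {..d}" unfolding \<iota>_def by (rule bij_betw_inv_into[OF \<sigma>])
  define w where "w = (\<lambda>k. v (\<iota> k))"
  have v_eq: "v k = w (\<sigma> k)" if "k \<le> d" for k
    unfolding w_def \<iota>_def using \<sigma> that by (simp add: bij_betw_def inv_into_f_f)
  have v_Zd: "\<forall>k\<le>d. v k \<in> Zd d" and "aff_indep d v"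
    using assms(1) unfolding lattice_simplex_def by auto
  have "bary_frame d w"
    unfolding w_def using bary_frame_reindex[OF bary_frame_if_aff_indep[OF \<open>aff_indep d v\<close>] \<iota>] v_Zd
    by (auto simp: Zd_def)
  moreover have "w k \<in> Zd d" if "k \<le> d" for k
    unfolding w_def using v_Zd \<iota> that by (auto dest: bij_betwE)
  moreover have "w ` {..d} = v ` \<iota> ` {..d}" unfolding w_def by (simp add: image_image)
  hence "w ` {..d} = v ` {..d}" using \<iota> by (simp add: bij_betw_def)
  moreover have "is_bary d v z (\<lambda>k. b (\<sigma> k)) \<longleftrightarrow> is_bary d (\<lambda>k. w (\<sigma> k)) z (\<lambda>k. b (\<sigma> k))"
    by (rule is_bary_cong) (simp_all add: v_eq)
  hence "is_bary d w z b" using z is_bary_reindex[OF \<sigma>] by blast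
  ultimately show ?thesis using that by blast
qed

theorem mainTheorem16:
  fixes d :: nat and v :: "nat \<Rightarrow> pt" and z :: pt
  assumes "d \<ge> 2"
    and "lattice_simplex d v"
    and "interior_d d (conv (v ` {..d})) \<inter> Zd d = {z}"
    and "\<exists>\<sigma>. bij_betw \<sigma> {..d} {..d} \<and> is_bary d v z (\<lambda>k. target_bary d (\<sigma> k))"
  shows "\<exists>(h::int) (a::nat \<Rightarrow> int). h > 0 \<and> (\<forall>i<d - 1. 0 \<le> a i \<and> a i < h) \<and>
           unimod_equiv d (conv (v ` {..d}))
             (conv (T_verts d \<union> {ah_point d a h, - ah_point d a h}))"
proof -
  obtain \<sigma> where "bij_betw \<sigma> {..d} {..d}" "is_bary d v z (\<lambda>k. target_bary d (\<sigma> k))"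
    using assms(4) by blast
  then obtain w where frame: "bary_frame d w" and w_Zd: "\<And>k. k \<le> d \<Longrightarrow> w k \<in> Zd d"
    and w_image: "w ` {..d} = v ` {..d}" and z: "is_bary d w z (target_bary d)"
    using lattice_simplex_reorder[OF assms(2)] by blast
  interpret sylvester_simplex d w "d - 1" z
  proof (intro sylvester_simplex.intro sylvester_simplex_axioms.intro frame w_Zd z)
    show "d = Suc (d - 1)" using assms(1) by simp
    show "interior_d d (conv (w ` {..d})) \<inter> Zd d = {z}" unfolding w_image by (rule assms(3))
  qed
  show ?thesis using ex_unimod_equiv_normal_form unfolding w_image .
qed

end
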